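(* Let $d\ge1$ and $K\ge d+2$. Then for every $\mathbf W\in\mathrm{OB}(d,K)$ we have $\rho_{\text{one-vs-rest}}(\mathbf W)\le 1$, and equality holds only if $\mathbf 0\in\operatorname{conv}\{\mathbf w_1,\dots,\mathbf w_K\}$.
   Context: $\mathrm{OB}(d,K)$ is the set of real $d\times K$ matrices with unit-norm columns $\mathbf w_1,\dots,\mathbf w_K$. For a point $\mathbf v$ and finite set $\mathcal W$, $\operatorname{dist}(\mathbf v,\mathcal W)=\inf\{\|\mathbf v-\mathbf w\|_2:\mathbf w\in\operatorname{conv}(\mathcal W)\}$. $\rho_{\text{one-vs-rest}}(\mathbf W)=\min_{k}\operatorname{dist}(\mathbf w_k,\{\mathbf w_j\}_{j\ne k})$. *)

theory Defs
  imports "HOL-Analysis.Analysis"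
begin

definition dist_conv :: "'a::euclidean_space \<Rightarrow> 'a set \<Rightarrow> real" where
  "dist_conv v W = Inf ((\<lambda>x. norm (v - x)) ` (convex hull W))"

definition rho_ovr :: "nat \<Rightarrow> (nat \<Rightarrow> 'a::euclidean_space) \<Rightarrow> real" where
  "rho_ovr K w = Min ((\<lambda>k. dist_conv (w k) (w ` ({..<K} - {k}))) ` {..<K})"

end

theory Submission
  imports Defs
begin

text \<open>
  If two of the vectors coincide, the margin is 0. Otherwise Radon's theorem splits the
  K \<ge> d + 2 vectors into two disjoint groups whose convex hulls share a point p; every vector
  of the first group has all of the second group among the rest, so the margin is at most its
  distance to p. If the margin is at least 1, every unit vector of the first group lies in the
  half-space \<open>\<langle>x, p\<rangle> \<le> |p|\<^sup>2 / 2\<close>, hence so does p itself, forcing p = 0. Then p lies in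
  the convex hull of all vectors and the margin is at most the distance of a unit vector to 0.
\<close>

lemma dist_conv_le_norm_diff:
  assumes "p \<in> convex hull W"
  shows "dist_conv v W \<le> norm (v - p)"
  unfolding dist_conv_def
  by (rule cInf_lower) (use assms in \<open>auto intro: bdd_belowI[where m=0]\<close>)

lemma rho_ovr_le_norm_diff:
  assumes "k < K" "J \<subseteq> {..<K} - {k}" "p \<in> convex hull (w ` J)"
  shows "rho_ovr K w \<le> norm (w k - p)"
proof -
  have "rho_ovr K w \<le> dist_conv (w k) (w ` ({..<K} - {k}))"
    unfolding rho_ovr_def using assms(1) by (intro Min_le) auto
  also have "\<dots> \<le> norm (w k - p)"
    using subsetD[OF hull_mono[OF image_mono[OF assms(2)]] assms(3)] by (rule dist_conv_le_norm_diff)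
  finally show ?thesis .
qed

lemma rho_ovr_nonpos_if_not_inj:
  assumes "\<not> inj_on w {..<K}"
  shows "rho_ovr K w \<le> 0"
proof -
  obtain j k where "j < K" "k < K" "j \<noteq> k" "w j = w k"
    using assms unfolding inj_on_def by auto
  then have "rho_ovr K w \<le> norm (w k - w j)"
    by (intro rho_ovr_le_norm_diff[where J = "{j}"]) (auto simp: hull_inc)
  with \<open>w j = w k\<close> show ?thesis by simp
qed

lemma Radon_indexed:
  fixes w :: "'i \<Rightarrow> 'a::euclidean_space"
  assumes "inj_on w S" "finite S" "card S \<ge> DIM('a) + 2"
  obtains I J p where "I \<subseteq> S" "J \<subseteq> S - I" "I \<noteq> {}"
    "p \<in> convex hull (w ` I)" "p \<in> convex hull (w ` J)"
proof -
  have "affine_dependent (w ` S)"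
    using assms by (intro affine_dependent_biggerset) (auto simp: card_image)
  then obtain M P where MP: "M \<subseteq> w ` S" "P \<subseteq> w ` S" "M \<inter> P = {}"
      "convex hull M \<inter> convex hull P \<noteq> {}"
    by (rule Radon)
  define I where "I = {k \<in> S. w k \<in> M}"
  define J where "J = {k \<in> S. w k \<in> P}"
  have "w ` I = M" "w ` J = P"
    using MP(1,2) unfolding I_def J_def by auto
  moreover obtain p where "p \<in> convex hull M" "p \<in> convex hull P"
    using MP(4) by auto
  moreover have "J \<subseteq> S - I"
    using MP(3) unfolding I_def J_def by auto
  moreover have "I \<noteq> {}"
    using \<open>w ` I = M\<close> \<open>p \<in> convex hull M\<close> by auto
  ultimately show ?thesis
    by (intro that[of I J p]) (auto simp: I_def)
qed

lemma convex_hull_point_eq_0_if_far_from_short_vectors: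
  fixes p :: "'a::real_inner"
  assumes "p \<in> convex hull M" "\<And>m. m \<in> M \<Longrightarrow> norm m \<le> 1 \<and> 1 \<le> norm (m - p)"
  shows "p = 0"
proof -
  have "inner m p \<le> inner p p / 2" if "m \<in> M" for m
  proof -
    have "inner m m \<le> 1"
      using assms(2)[OF that] by (simp add: dot_square_norm power_le_one)
    also have "1 \<le> (norm (m - p))\<^sup>2"
      using assms(2)[OF that] by (simp add: one_le_power)
    also have "\<dots> = inner m m - 2 * inner m p + inner p p"
      by (simp add: power2_norm_eq_inner inner_diff inner_commute)
    finally show ?thesis by simp
  qed
  then have "convex hull M \<subseteq> {x. inner p x \<le> inner p p / 2}"
    using convex_halfspace_le[of p "inner p p / 2"] by (intro hull_minimal) (auto simp: inner_commute)
  then have "inner p p \<le> inner p p / 2"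
    using assms(1) by auto
  then have "inner p p \<le> 0"
    by simp
  then show ?thesis
    by (metis inner_eq_zero_iff inner_ge_zero order_antisym)
qed

lemma Radon_point_eq_0_if_rho_ovr_ge_1:
  assumes "1 \<le> rho_ovr K w" "\<And>k. k \<in> I \<Longrightarrow> norm (w k) \<le> 1"
    and "I \<subseteq> {..<K}" "J \<subseteq> {..<K} - I"
    and "p \<in> convex hull (w ` I)" "p \<in> convex hull (w ` J)"
  shows "p = 0"
proof (rule convex_hull_point_eq_0_if_far_from_short_vectors[OF assms(5)])
  fix m assume "m \<in> w ` I"
  then obtain k where k: "k \<in> I" "m = w k"
    by blast
  have "rho_ovr K w \<le> norm (w k - p)"
    using k(1) assms(3,4,6) by (intro rho_ovr_le_norm_diff) auto
  then show "norm m \<le> 1 \<and> 1 \<le> norm (m - p)"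
    using assms(1,2) k by auto
qed

theorem mainTheorem5:
  fixes w :: "nat \<Rightarrow> 'a::euclidean_space" and K :: nat
  assumes "K \<ge> DIM('a) + 2"
    and "\<forall>k<K. norm (w k) = 1"
  shows "rho_ovr K w \<le> 1 \<and> (rho_ovr K w = 1 \<longrightarrow> 0 \<in> convex hull (w ` {..<K}))"
proof (cases "inj_on w {..<K}")
  case False
  then show ?thesis
    using rho_ovr_nonpos_if_not_inj[of w K] by simp
next
  case True
  obtain I J p where IJ: "I \<subseteq> {..<K}" "J \<subseteq> {..<K} - I" "I \<noteq> {}"
    and p: "p \<in> convex hull (w ` I)" "p \<in> convex hull (w ` J)"
    by (rule Radon_indexed[OF True]) (use assms(1) in auto)
  have p0: "p = 0" if "1 \<le> rho_ovr K w"
    by (rule Radon_point_eq_0_if_rho_ovr_ge_1[OF that _ IJ(1,2) p]) (use assms(2) IJ(1) in force)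
  obtain k where k: "k \<in> I"
    using IJ(3) by auto
  have "rho_ovr K w \<le> norm (w k - p)"
    using k IJ(1,2) p(2) by (intro rho_ovr_le_norm_diff) auto
  moreover have "norm (w k) = 1"
    using assms(2) IJ(1) k by auto
  moreover have "w ` J \<subseteq> w ` {..<K}"
    using IJ(2) by auto
  ultimately show ?thesis
    using p0 p(2) hull_mono[of "w ` J" "w ` {..<K}"] by (cases "1 \<le> rho_ovr K w") auto
qed

end
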